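(* Let $n\ge 1$, let $w_n\ge w_{n-1}\ge\dots\ge w_1>0$ be real weights and let $B\in\{1,\dots,n\}$. Consider minimising the fitness function \[ f(x)=\sum_{i=1}^n w_i x_i+\max\{0,\,B-b(x)\}\cdot(n w_n+1),\qquad b(x)=\sum_{i=1}^n x_i, \] over $x\in\{0,1\}^n$ with either RLS or the (1+1) EA (both defined in the context). Starting with an arbitrary initial search point, the expected number of iterations until the algorithm's current search point is feasible (i.e. satisfies $b(x)\ge B$) is $O\!\left(n\log\frac{n}{n-B}\right)$, where the constant hidden in the $O$-notation does not depend on $n$, the weights, or $B$.
   Context: Problem: minimise $f_{\mathrm{obj}}(x)=\sum_{i=1}^n w_ix_i$ over $x=x_n\cdots x_1\in\{0,1\}^n$ subject to the uniform constraint $x_1+\dots+x_n\ge B$; a search point is feasible if it satisfies the constraint. The algorithms use the penalised fitness $f$ given in the claim. (1+1) EA: maintain a current search point $x_t$ ($x_0$ the initial point); in each iteration create $x'$ by flipping each bit of $x_t$ independently with probability $1/n$; set $x_{t+1}=x'$ if $f(x')\le f(x_t)$, otherwise $x_{t+1}=x_t$. RLS: maintain $x_t$; in each iteration choose $b\in\{1,2\}$ uniformly at random, create $x'$ by flipping $b$ distinct bits of $x_t$ chosen uniformly at random; set $x_{t+1}=x'$ if $f(x')\le f(x_t)$, otherwise $x_{t+1}=x_t$. *)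

theory Defs
  imports "HOL-Probability.Probability"
begin

text \<open>Search points x = x_n ... x_1 in {0,1}^n are represented as functions
  nat => bool; bit i (1 <= i <= n) is x i (True = 1).\<close>

definition ones :: "nat \<Rightarrow> (nat \<Rightarrow> bool) \<Rightarrow> nat" where
  "ones n x = card {i \<in> {1..n}. x i}"

definition fit :: "nat \<Rightarrow> (nat \<Rightarrow> real) \<Rightarrow> nat \<Rightarrow> (nat \<Rightarrow> bool) \<Rightarrow> real" where
  "fit n w B x = (\<Sum>i = 1..n. w i * (if x i then 1 else 0))
     + max 0 (real B - real (ones n x)) * (real n * w n + 1)"

definition feasible :: "nat \<Rightarrow> nat \<Rightarrow> (nat \<Rightarrow> bool) \<Rightarrow> bool" where
  "feasible n B x \<longleftrightarrow> ones n x \<ge> B"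

definition flip :: "(nat \<Rightarrow> bool) \<Rightarrow> (nat \<Rightarrow> bool) \<Rightarrow> nat \<Rightarrow> bool" where
  "flip x F = (\<lambda>i. x i \<noteq> F i)"

definition select :: "nat \<Rightarrow> (nat \<Rightarrow> real) \<Rightarrow> nat \<Rightarrow> (nat \<Rightarrow> bool) \<Rightarrow> (nat \<Rightarrow> bool) \<Rightarrow> nat \<Rightarrow> bool" where
  "select n w B x y = (if fit n w B y \<le> fit n w B x then y else x)"

definition ea_step :: "nat \<Rightarrow> (nat \<Rightarrow> real) \<Rightarrow> nat \<Rightarrow> (nat \<Rightarrow> bool) \<Rightarrow> (nat \<Rightarrow> bool) pmf" where
  "ea_step n w B x =
     map_pmf (\<lambda>F. select n w B x (flip x F))
       (Pi_pmf {1..n} False (\<lambda>_. bernoulli_pmf (1 / real n)))"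

text \<open>One iteration of RLS: choose b in {1,2} uniformly, flip b distinct bits chosen
  uniformly at random. (Convention: if b > n, which only happens for n = 1, no bit is flipped.)\<close>
definition rls_step :: "nat \<Rightarrow> (nat \<Rightarrow> real) \<Rightarrow> nat \<Rightarrow> (nat \<Rightarrow> bool) \<Rightarrow> (nat \<Rightarrow> bool) pmf" where
  "rls_step n w B x =
     do { b \<leftarrow> pmf_of_set {1::nat, 2};
          F \<leftarrow> (if b \<le> n then pmf_of_set {F. F \<subseteq> {1..n} \<and> card F = b} else return_pmf {});
          return_pmf (select n w B x (flip x (\<lambda>i. i \<in> F))) }"

text \<open>survive K P t x = Pr[x_0, ..., x_t all satisfy P] for the Markov chain with kernel K
  started in x_0 = x.\<close>
fun survive :: "('s \<Rightarrow> 's pmf) \<Rightarrow> ('s \<Rightarrow> bool) \<Rightarrow> nat \<Rightarrow> 's \<Rightarrow> ennreal" where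
  "survive K P 0 x = (if P x then 1 else 0)"
| "survive K P (Suc t) x = (if P x then (\<integral>\<^sup>+ y. survive K P t y \<partial>measure_pmf (K x)) else 0)"

text \<open>Expected first time T = min {t. not P x_t}: E[T] = sum_{t>=0} Pr[T > t].\<close>
definition exp_hit :: "('s \<Rightarrow> 's pmf) \<Rightarrow> ('s \<Rightarrow> bool) \<Rightarrow> 's \<Rightarrow> ennreal" where
  "exp_hit K P x = (\<Sum>t. survive K P t x)"

text \<open>The bound n log(n/(n-B)); for B = n this is log(n/0) = +infinity.\<close>
definition bound :: "nat \<Rightarrow> nat \<Rightarrow> ennreal" where
  "bound n B = (if B < n then ennreal (real n * ln (real n / real (n - B))) else \<infinity>)"

end

theory Submission
  imports Defs
begin

text \<open>While the current point is infeasible the penalty term dominates the fitness, so both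
  algorithms never lose a 1-bit and accept every offspring with more 1-bits. With \<open>k\<close> ones,
  flipping exactly one of the \<open>n - k\<close> zero-bits has probability at least \<open>1/(e n)\<close> per bit
  for the (1+1) EA and \<open>1/(2n)\<close> for RLS, so the level \<open>k\<close> is left with probability at
  least \<open>(n - k)/(3n)\<close>. By the fitness-level method the expected time is at most
  \<open>3n \<Sum>k<B. 1/(n - k) \<le> 3n ln (n/(n - B))\<close>.\<close>

lemma ones_le: "ones n x \<le> n"
proof -
  have "card {i \<in> {1..n}. x i} \<le> card {1..n}" by (rule card_mono) auto
  then show ?thesis unfolding ones_def by simp
qed

lemma card_zero_bits: "card {j \<in> {1..n}. \<not> x j} = n - ones n x"
proof -
  have "{j \<in> {1..n}. \<not> x j} = {1..n} - {i \<in> {1..n}. x i}" by auto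
  moreover have "card ({1..n} - {i \<in> {1..n}. x i}) = n - card {i \<in> {1..n}. x i}"
    by (subst card_Diff_subset) auto
  ultimately show ?thesis unfolding ones_def by simp
qed

lemma ones_flip_single:
  assumes "j \<in> {1..n}" "\<not> x j"
  shows "ones n (flip x (\<lambda>i. i = j)) = Suc (ones n x)"
proof -
  have "{i \<in> {1..n}. flip x (\<lambda>i. i = j) i} = insert j {i \<in> {1..n}. x i}"
    using assms unfolding flip_def by auto
  then show ?thesis unfolding ones_def using assms by simp
qed

lemma weight_mono:
  fixes w :: "nat \<Rightarrow> real"
  assumes mono: "\<forall>i\<in>{1..<n}. w i \<le> w (Suc i)" and "1 \<le> i" "i \<le> j" "j \<le> n"
  shows "w i \<le> w j"
  using assms(3,4)
proof (induction j rule: dec_induct)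
  case base then show ?case by simp
next
  case (step j)
  then have "w i \<le> w j" by simp
  also have "w j \<le> w (Suc j)" using mono assms(2) step.hyps step.prems by auto
  finally show ?case .
qed

lemma weight_sum_bounds:
  fixes w :: "nat \<Rightarrow> real"
  assumes "w 1 > 0" "\<forall>i\<in>{1..<n}. w i \<le> w (Suc i)"
  shows "0 \<le> (\<Sum>i = 1..n. w i * (if x i then 1 else 0))"
    and "(\<Sum>i = 1..n. w i * (if x i then 1 else 0)) \<le> real n * w n"
proof -
  have w: "0 \<le> w i" "w i \<le> w n" if "i \<in> {1..n}" for i
    using weight_mono[OF assms(2), of 1 i] weight_mono[OF assms(2), of i n] assms(1) that by auto
  show "0 \<le> (\<Sum>i = 1..n. w i * (if x i then 1 else 0))"
    using w by (intro sum_nonneg) auto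
  have "(\<Sum>i = 1..n. w i * (if x i then 1 else 0)) \<le> (\<Sum>i = 1..n. w n)"
    using w by (intro sum_mono) auto
  then show "(\<Sum>i = 1..n. w i * (if x i then 1 else 0)) \<le> real n * w n" by simp
qed

text \<open>Among infeasible points the penalty dominates: one more 1-bit lowers the penalty by
  at least \<open>n w\<^sub>n + 1\<close>, more than the whole weight part can grow.\<close>

lemma fit_less_if_more_ones:
  fixes w :: "nat \<Rightarrow> real"
  assumes "w 1 > 0" "\<forall>i\<in>{1..<n}. w i \<le> w (Suc i)"
    and more: "ones n a < ones n b" and infeasible: "ones n a < B"
  shows "fit n w B b < fit n w B a"
proof -
  have "1 \<le> n" using more ones_le[of n b] by linarith
  then have "0 \<le> w n" using weight_mono[OF assms(2), of 1 n] assms(1) by simp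
  then have M: "0 \<le> real n * w n + 1" by simp
  have "max 0 (real B - real (ones n b)) \<le> max 0 (real B - real (ones n a)) - 1"
    using more infeasible by simp
  then have "max 0 (real B - real (ones n b)) * (real n * w n + 1)
      \<le> (max 0 (real B - real (ones n a)) - 1) * (real n * w n + 1)"
    using M by (rule mult_right_mono)
  then show ?thesis
    using weight_sum_bounds[OF assms(1,2), of a] weight_sum_bounds[OF assms(1,2), of b]
    unfolding fit_def by (simp add: algebra_simps)
qed

lemma select_eq_if_more_ones:
  assumes "w 1 > 0" "\<forall>i\<in>{1..<n}. w i \<le> w (Suc i)" "ones n x < B" "ones n x < ones n y"
  shows "select n w B x y = y"
  using fit_less_if_more_ones[OF assms(1,2,4,3)] unfolding select_def by simp

lemma ones_select_ge:
  assumes "w 1 > 0" "\<forall>i\<in>{1..<n}. w i \<le> w (Suc i)" "ones n x < B"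
  shows "ones n x \<le> ones n (select n w B x y)"
  using fit_less_if_more_ones[OF assms(1,2), of y x B] assms(3)
  unfolding select_def by (cases "ones n y < ones n x") auto

lemma exp_hit_le_potential:
  fixes g :: "'s \<Rightarrow> ennreal"
  assumes "\<And>x. P x \<Longrightarrow> 1 + (\<integral>\<^sup>+ y. g y \<partial>measure_pmf (K x)) \<le> g x"
  shows "exp_hit K P x \<le> g x"
proof -
  have "(\<Sum>t<N. survive K P t x) \<le> g x" for N x
  proof (induction N arbitrary: x)
    case 0 show ?case by simp
  next
    case (Suc N)
    show ?case
    proof (cases "P x")
      case False
      then have "survive K P t x = 0" for t by (cases t) auto
      then show ?thesis by simp
    next
      case True
      have "(\<Sum>t<Suc N. survive K P t x) = 1 + (\<Sum>t<N. survive K P (Suc t) x)"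
        using True by (subst sum.lessThan_Suc_shift) simp
      also have "\<dots> = 1 + (\<integral>\<^sup>+ y. (\<Sum>t<N. survive K P t y) \<partial>measure_pmf (K x))"
        using True by (simp add: nn_integral_sum)
      also have "\<dots> \<le> 1 + (\<integral>\<^sup>+ y. g y \<partial>measure_pmf (K x))"
        by (intro add_left_mono nn_integral_mono Suc.IH)
      also have "\<dots> \<le> g x" using assms True .
      finally show ?thesis .
    qed
  qed
  then show ?thesis unfolding exp_hit_def by (intro suminf_le_const) auto
qed

text \<open>The fitness-level method: the potential is the expected time to climb from level \<open>l\<close>
  when every level \<open>k\<close> is left after a geometric waiting time of mean \<open>1 / p k\<close>.\<close>

lemma fitness_level_drift:
  fixes lv :: "'s \<Rightarrow> nat" and p :: "nat \<Rightarrow> real" and M :: "'s pmf"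
  assumes p_pos: "\<And>k. k < m \<Longrightarrow> 0 < p k" and l: "l < m"
    and no_drop: "\<And>y. y \<in> set_pmf M \<Longrightarrow> l \<le> lv y"
    and improve: "p l \<le> measure_pmf.prob M {y. l < lv y}"
  shows "1 + (\<integral>\<^sup>+ y. ennreal (\<Sum>k = lv y..<m. 1 / p k) \<partial>measure_pmf M)
    \<le> ennreal (\<Sum>k = l..<m. 1 / p k)"
proof -
  define g where "g l' = (\<Sum>k = l'..<m. 1 / p k)" for l'
  define d where "d = 1 / p l"
  define A where "A = {y. l < lv y}"
  have g_nonneg: "0 \<le> g l'" for l'
    unfolding g_def using p_pos by (intro sum_nonneg) (simp add: less_imp_le)
  have d: "0 < d" unfolding d_def using p_pos l by simp
  have g_split: "g l = d + g (Suc l)"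
    unfolding g_def d_def using l by (simp add: sum.atLeast_Suc_lessThan)
  have pointwise: "ennreal (g (lv y)) + ennreal d * indicator A y \<le> ennreal (g l)"
    if y: "y \<in> set_pmf M" for y
  proof (cases "y \<in> A")
    case False
    then show ?thesis using no_drop[OF y] unfolding A_def by simp
  next
    case True
    then have "g (lv y) \<le> g (Suc l)"
      unfolding g_def A_def using p_pos by (intro sum_mono2) (auto simp: less_imp_le)
    then show ?thesis using True g_split g_nonneg[of "lv y"] d
      by (simp add: ennreal_plus[symmetric] del: ennreal_plus)
  qed
  have "1 = ennreal d * ennreal (p l)"
    using d unfolding d_def by (simp add: ennreal_mult[symmetric])
  also have "\<dots> \<le> ennreal d * emeasure (measure_pmf M) A"
    using improve unfolding A_def
    by (intro mult_left_mono) (auto simp: measure_pmf.emeasure_eq_measure)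
  finally have "1 + (\<integral>\<^sup>+ y. ennreal (g (lv y)) \<partial>measure_pmf M)
      \<le> (\<integral>\<^sup>+ y. ennreal (g (lv y)) \<partial>measure_pmf M) + ennreal d * emeasure (measure_pmf M) A"
    by (simp add: add.commute add_right_mono)
  also have "\<dots> = (\<integral>\<^sup>+ y. ennreal (g (lv y)) + ennreal d * indicator A y \<partial>measure_pmf M)"
    by (subst nn_integral_add) (auto simp: nn_integral_cmult_indicator)
  also have "\<dots> \<le> (\<integral>\<^sup>+ y. ennreal (g l) \<partial>measure_pmf M)"
    by (intro nn_integral_mono_AE) (auto simp: AE_measure_pmf_iff pointwise)
  also have "\<dots> = ennreal (g l)" by (simp add: measure_pmf.emeasure_space_1)
  finally show ?thesis unfolding g_def .
qed

lemma exp_hit_le_fitness_levels: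
  fixes lv :: "'s \<Rightarrow> nat" and p :: "nat \<Rightarrow> real"
  assumes "\<And>k. k < m \<Longrightarrow> 0 < p k"
    and "\<And>x y. lv x < m \<Longrightarrow> y \<in> set_pmf (K x) \<Longrightarrow> lv x \<le> lv y"
    and "\<And>x. lv x < m \<Longrightarrow> p (lv x) \<le> measure_pmf.prob (K x) {y. lv x < lv y}"
  shows "exp_hit K (\<lambda>x. lv x < m) x0 \<le> ennreal (\<Sum>k = lv x0..<m. 1 / p k)"
  by (rule exp_hit_le_potential[where g = "\<lambda>x. ennreal (\<Sum>k = lv x..<m. 1 / p k)"])
    (rule fitness_level_drift; use assms in auto)

lemma sum_inverse_le_ln:
  assumes "B < n"
  shows "(\<Sum>k<B. 1 / real (n - k)) \<le> ln (real n / real (n - B))"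
  using assms
proof (induction B)
  case 0 then show ?case by simp
next
  case (Suc B)
  define a where "a = real (n - B)"
  have a: "1 < a" "real (n - Suc B) = a - 1" using Suc.prems unfolding a_def by auto
  have "ln ((a - 1) / a) \<le> (a - 1) / a - 1" using a by (intro ln_le_minus_one) auto
  also have "\<dots> = - (1 / a)" using a by (simp add: field_simps)
  finally have step: "1 / a \<le> ln a - ln (a - 1)" using a by (simp add: ln_div)
  have "(\<Sum>k<Suc B. 1 / real (n - k)) = (\<Sum>k<B. 1 / real (n - k)) + 1 / a"
    unfolding a_def by simp
  also have "\<dots> \<le> ln (real n / a) + (ln a - ln (a - 1))"
    using Suc step unfolding a_def by simp
  also have "\<dots> = ln (real n / real (n - Suc B))" using a Suc.prems by (simp add: ln_div)
  finally show ?case .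
qed

lemma exp_hit_infeasible_le_bound:
  assumes c: "0 < c" and Bn: "B \<le> n"
    and no_drop: "\<And>x y. ones n x < B \<Longrightarrow> y \<in> set_pmf (K x) \<Longrightarrow> ones n x \<le> ones n y"
    and improve: "\<And>x. ones n x < B \<Longrightarrow>
       real (n - ones n x) / (c * real n) \<le> measure_pmf.prob (K x) {y. ones n x < ones n y}"
  shows "exp_hit K (\<lambda>x. \<not> feasible n B x) x0 \<le> ennreal c * bound n B"
proof (cases "B < n")
  case False
  then show ?thesis using c unfolding bound_def by (simp add: ennreal_mult_top)
next
  case True
  define p where "p k = real (n - k) / (c * real n)" for k
  have "exp_hit K (\<lambda>x. \<not> feasible n B x) x0 = exp_hit K (\<lambda>x. ones n x < B) x0"
    unfolding feasible_def not_le ..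
  also have "\<dots> \<le> ennreal (\<Sum>k = ones n x0..<B. 1 / p k)"
    using Bn c no_drop improve unfolding p_def by (intro exp_hit_le_fitness_levels) auto
  also have "(\<Sum>k = ones n x0..<B. 1 / p k) \<le> (\<Sum>k<B. 1 / p k)"
    using c unfolding p_def by (intro sum_mono2) auto
  also have "\<dots> = c * real n * (\<Sum>k<B. 1 / real (n - k))"
    unfolding p_def by (simp add: sum_distrib_left)
  also have "\<dots> \<le> c * real n * ln (real n / real (n - B))"
    using True c by (intro mult_left_mono sum_inverse_le_ln) auto
  also have "ennreal \<dots> = ennreal c * bound n B"
    using True c unfolding bound_def by (simp add: ennreal_mult mult.assoc)
  finally show ?thesis by (simp add: ennreal_leI)
qed

text \<open>An improvement is accepted, and flipping a single 0-bit is one.\<close>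

lemma prob_more_ones_ge_single_flips:
  fixes Q :: "(nat \<Rightarrow> bool) pmf"
  assumes w1: "w 1 > 0" and mono: "\<forall>i\<in>{1..<n}. w i \<le> w (Suc i)" and infeasible: "ones n x < B"
  shows "(\<Sum>j | j \<in> {1..n} \<and> \<not> x j. pmf Q (\<lambda>i. i = j))
    \<le> measure_pmf.prob (map_pmf (\<lambda>F. select n w B x (flip x F)) Q) {y. ones n x < ones n y}"
proof -
  define Z where "Z = {j. j \<in> {1..n} \<and> \<not> x j}"
  define single where "single j = (\<lambda>i::nat. i = j)" for j :: nat
  have into_event: "single ` Z \<subseteq> (\<lambda>F. select n w B x (flip x F)) -` {y. ones n x < ones n y}"
  proof
    fix F assume "F \<in> single ` Z"
    then obtain j where j: "j \<in> Z" "F = single j" by auto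
    then have "ones n (flip x F) = Suc (ones n x)"
      using ones_flip_single[of j n x] unfolding Z_def single_def by auto
    then show "F \<in> (\<lambda>F. select n w B x (flip x F)) -` {y. ones n x < ones n y}"
      using select_eq_if_more_ones[OF w1 mono infeasible] by simp
  qed
  have "inj_on single Z" unfolding single_def inj_on_def by metis
  then have "(\<Sum>j\<in>Z. pmf Q (single j)) = (\<Sum>F\<in>single ` Z. pmf Q F)"
    by (simp add: sum.reindex)
  also have "\<dots> = measure_pmf.prob Q (single ` Z)"
    by (rule measure_measure_pmf_finite[symmetric]) (simp add: Z_def)
  also have "\<dots> \<le> measure_pmf.prob Q ((\<lambda>F. select n w B x (flip x F)) -` {y. ones n x < ones n y})"
    using into_event by (rule measure_pmf.finite_measure_mono) simp
  finally show ?thesis unfolding Z_def single_def by simp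
qed

lemma pmf_Pi_bernoulli_single:
  assumes "finite I" "j \<in> I" "0 \<le> p" "p \<le> 1"
  shows "pmf (Pi_pmf I False (\<lambda>_. bernoulli_pmf p)) (\<lambda>i. i = j) = p * (1 - p) ^ (card I - 1)"
proof -
  have "pmf (Pi_pmf I False (\<lambda>_. bernoulli_pmf p)) (\<lambda>i. i = j)
      = (\<Prod>i\<in>I. pmf (bernoulli_pmf p) (i = j))"
    using assms by (subst pmf_Pi') auto
  also have "\<dots> = pmf (bernoulli_pmf p) True * (\<Prod>i\<in>I - {j}. pmf (bernoulli_pmf p) False)"
    using assms by (subst prod.remove[of _ j]) (auto intro!: prod.cong)
  finally show ?thesis using assms by (simp add: card_Diff_singleton)
qed

lemma exp_minus_one_le_power:
  assumes "1 \<le> n"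
  shows "exp (-1) \<le> (1 - 1 / real n) ^ (n - 1)"
proof (cases "n = 1")
  case True then show ?thesis by simp
next
  case False
  define m where "m = n - 1"
  have m: "1 \<le> m" "real n = real m + 1" using assms False unfolding m_def by auto
  have "(1 + 1 / real m) ^ m \<le> exp (1 / real m) ^ m"
    by (intro power_mono) (auto simp: add.commute)
  also have "\<dots> = exp 1" using m by (simp flip: exp_of_nat_mult)
  finally have "1 / exp 1 \<le> 1 / (1 + 1 / real m) ^ m"
    by (intro divide_left_mono) (auto intro!: mult_pos_pos zero_less_power add_pos_nonneg)
  also have "1 / (1 + 1 / real m) ^ m = (1 - 1 / real n) ^ (n - 1)"
    using m unfolding m_def[symmetric] by (simp add: field_simps power_one_over)
  finally show ?thesis by (simp add: exp_minus inverse_eq_divide)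
qed

lemma ones_ge_on_ea_step:
  assumes "w 1 > 0" "\<forall>i\<in>{1..<n}. w i \<le> w (Suc i)" "ones n x < B"
    and "y \<in> set_pmf (ea_step n w B x)"
  shows "ones n x \<le> ones n y"
  using assms(4) ones_select_ge[OF assms(1-3)] unfolding ea_step_def by auto

lemma ea_step_prob_more_ones:
  assumes "w 1 > 0" "\<forall>i\<in>{1..<n}. w i \<le> w (Suc i)" "ones n x < B" "1 \<le> n"
  shows "real (n - ones n x) / (exp 1 * real n)
    \<le> measure_pmf.prob (ea_step n w B x) {y. ones n x < ones n y}"
proof -
  have single: "pmf (Pi_pmf {1..n} False (\<lambda>_. bernoulli_pmf (1 / real n))) (\<lambda>i. i = j)
      = 1 / real n * (1 - 1 / real n) ^ (n - 1)" if "j \<in> {1..n}" for j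
    using that assms(4) by (subst pmf_Pi_bernoulli_single) auto
  have "real (n - ones n x) / (exp 1 * real n)
      = real (n - ones n x) * (1 / real n * exp (-1))"
    by (simp add: exp_minus field_simps)
  also have "\<dots> \<le> real (n - ones n x) * (1 / real n * (1 - 1 / real n) ^ (n - 1))"
    using exp_minus_one_le_power[OF assms(4)] by (intro mult_left_mono) auto
  also have "\<dots> = (\<Sum>j | j \<in> {1..n} \<and> \<not> x j.
      pmf (Pi_pmf {1..n} False (\<lambda>_. bernoulli_pmf (1 / real n))) (\<lambda>i. i = j))"
    using card_zero_bits[of n x] single by simp
  also have "\<dots> \<le> measure_pmf.prob (ea_step n w B x) {y. ones n x < ones n y}"
    unfolding ea_step_def by (rule prob_more_ones_ge_single_flips[OF assms(1-3)])
  finally show ?thesis .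
qed

lemma rls_step_eq_map_select_flip:
  assumes "2 \<le> n"
  shows "rls_step n w B x = map_pmf (\<lambda>F. select n w B x (flip x F))
    (map_pmf (\<lambda>F i. i \<in> F) (pmf_of_set {1::nat, 2} \<bind> (\<lambda>b. pmf_of_set {F. F \<subseteq> {1..n} \<and> card F = b})))"
  unfolding rls_step_def map_pmf_comp map_bind_pmf
proof (intro bind_pmf_cong refl)
  fix b assume "b \<in> set_pmf (pmf_of_set {1::nat, 2})"
  then have "b \<le> n" using assms by auto
  then show "(if b \<le> n then pmf_of_set {F. F \<subseteq> {1..n} \<and> card F = b} else return_pmf {}) \<bind>
      (\<lambda>F. return_pmf (select n w B x (flip x (\<lambda>i. i \<in> F)))) =
    map_pmf (\<lambda>F. select n w B x (flip x (\<lambda>i. i \<in> F))) (pmf_of_set {F. F \<subseteq> {1..n} \<and> card F = b})"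
    by (simp add: map_pmf_def)
qed

lemma ones_ge_on_rls_step:
  assumes "w 1 > 0" "\<forall>i\<in>{1..<n}. w i \<le> w (Suc i)" "ones n x < B" "2 \<le> n"
    and "y \<in> set_pmf (rls_step n w B x)"
  shows "ones n x \<le> ones n y"
  using assms(5) ones_select_ge[OF assms(1-3)] unfolding rls_step_eq_map_select_flip[OF assms(4)]
  by auto

lemma rls_step_prob_more_ones:
  assumes "w 1 > 0" "\<forall>i\<in>{1..<n}. w i \<le> w (Suc i)" "ones n x < B" "2 \<le> n"
  shows "real (n - ones n x) / (2 * real n)
    \<le> measure_pmf.prob (rls_step n w B x) {y. ones n x < ones n y}"
proof -
  define S where "S b = {F. F \<subseteq> {1..n} \<and> card F = b}" for b
  define Q where "Q = map_pmf (\<lambda>F i. i \<in> F) (pmf_of_set {1::nat, 2} \<bind> (\<lambda>b. pmf_of_set (S b)))"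
  have S_fin: "finite (S b)" for b
    unfolding S_def by (rule finite_subset[of _ "Pow {1..n}"]) auto
  have S_ne: "S b \<noteq> {}" if "b \<le> n" for b
  proof -
    have "{1..b} \<in> S b" using that unfolding S_def by auto
    then show ?thesis by auto
  qed
  have "card (S 1) = n" unfolding S_def using n_subsets[of "{1..n}" 1] by simp
  then have singleton: "pmf (pmf_of_set (S 1)) {j} = 1 / real n" if "j \<in> {1..n}" for j
    using S_fin S_ne assms(4) that by (simp add: S_def)
  have single: "1 / (2 * real n) \<le> pmf Q (\<lambda>i. i = j)" if "j \<in> {1..n}" for j
  proof -
    have "1 / (2 * real n) \<le> (1 / real n + pmf (pmf_of_set (S 2)) {j}) / 2"
      using pmf_nonneg[of "pmf_of_set (S 2)" "{j}"] by (simp add: field_simps)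
    also have "\<dots> = (pmf (pmf_of_set (S 1)) {j} + pmf (pmf_of_set (S 2)) {j}) / 2"
      using singleton[OF that] by simp
    also have "\<dots> = pmf (pmf_of_set {1::nat, 2} \<bind> (\<lambda>b. pmf_of_set (S b))) {j}"
      by (simp add: pmf_bind integral_pmf_of_set)
    also have "\<dots> = pmf Q (\<lambda>i. i = j)"
    proof -
      have "inj (\<lambda>F i. i \<in> F)" by (rule injI) (simp add: fun_eq_iff set_eq_iff)
      from pmf_map_inj'[OF this, of "pmf_of_set {1::nat, 2} \<bind> (\<lambda>b. pmf_of_set (S b))" "{j}"]
      show ?thesis unfolding Q_def by simp
    qed
    finally show ?thesis .
  qed
  have "real (n - ones n x) / (2 * real n) = (\<Sum>j | j \<in> {1..n} \<and> \<not> x j. 1 / (2 * real n))"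
    using card_zero_bits[of n x] by simp
  also have "\<dots> \<le> (\<Sum>j | j \<in> {1..n} \<and> \<not> x j. pmf Q (\<lambda>i. i = j))"
    using single by (intro sum_mono) auto
  also have "\<dots> \<le> measure_pmf.prob (rls_step n w B x) {y. ones n x < ones n y}"
    unfolding rls_step_eq_map_select_flip[OF assms(4)] Q_def S_def
    by (rule prob_more_ones_ge_single_flips[OF assms(1-3)])
  finally show ?thesis .
qed

theorem lemma2:
  shows "\<exists>C::real. C > 0 \<and> (\<exists>n0::nat. \<forall>n w B x0.
     n \<ge> max 1 n0 \<and> w 1 > 0 \<and> (\<forall>i\<in>{1..<n}. w i \<le> w (Suc i)) \<and>
     1 \<le> B \<and> B \<le> n \<and> (\<forall>i. i \<notin> {1..n} \<longrightarrow> \<not> x0 i) \<longrightarrow>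
       exp_hit (ea_step n w B) (\<lambda>x. \<not> feasible n B x) x0 \<le> ennreal C * bound n B \<and>
       exp_hit (rls_step n w B) (\<lambda>x. \<not> feasible n B x) x0 \<le> ennreal C * bound n B)"
proof (intro exI[of _ "3::real"] conjI exI[of _ "2::nat"] allI impI)
  fix n :: nat and w :: "nat \<Rightarrow> real" and B :: nat and x0 :: "nat \<Rightarrow> bool"
  assume "max 1 2 \<le> n \<and> w 1 > 0 \<and> (\<forall>i\<in>{1..<n}. w i \<le> w (Suc i)) \<and>
     1 \<le> B \<and> B \<le> n \<and> (\<forall>i. i \<notin> {1..n} \<longrightarrow> \<not> x0 i)"
  then have n: "2 \<le> n" and w: "w 1 > 0" "\<forall>i\<in>{1..<n}. w i \<le> w (Suc i)" and Bn: "B \<le> n"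
    by auto
  have "exp_hit (ea_step n w B) (\<lambda>x. \<not> feasible n B x) x0 \<le> ennreal (exp 1) * bound n B"
    using Bn n
    by (intro exp_hit_infeasible_le_bound ones_ge_on_ea_step[OF w] ea_step_prob_more_ones[OF w]) auto
  also have "\<dots> \<le> ennreal 3 * bound n B"
    using exp_le by (intro mult_right_mono ennreal_leI) auto
  finally show "exp_hit (ea_step n w B) (\<lambda>x. \<not> feasible n B x) x0 \<le> ennreal 3 * bound n B" .
  have "exp_hit (rls_step n w B) (\<lambda>x. \<not> feasible n B x) x0 \<le> ennreal 2 * bound n B"
    using Bn n
    by (intro exp_hit_infeasible_le_bound ones_ge_on_rls_step[OF w] rls_step_prob_more_ones[OF w]) auto
  also have "\<dots> \<le> ennreal 3 * bound n B"
    by (intro mult_right_mono ennreal_leI) auto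
  finally show "exp_hit (rls_step n w B) (\<lambda>x. \<not> feasible n B x) x0 \<le> ennreal 3 * bound n B" .
qed (simp)

end
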